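(* Let ${\cal G}$ be a graph as described in the context, and let $\rho_{\sup}$, $\rho_{\inf}$ be the supremum and infimum of its half-degree. Let $f\in C^0_{\rm fn}({\cal G})$ be edgewise convex (its restriction to each edge interval is convex, not necessarily strictly) and non-negative at all vertices. Then $$\int_{\cal G} f\,d{\cal E}\le \rho_{\sup}\int_{\cal G} f\,d{\cal V}.$$ Similarly, if $f\in C^0_{\rm fn}({\cal G})$ is non-negative and edgewise concave, then $\int_{\cal G} f\,d{\cal E}\ge \rho_{\inf}\int_{\cal G} f\,d{\cal V}$. If ${\cal G}$ is regular (i.e. $\rho_{\inf}=\rho_{\sup}$), the non-negativity requirements may be dropped.
   Context: A graph ${\cal G}$ consists of an undirected graph $(V,E)$ (possibly infinite; multiple edges and self-loops allowed), a length $\ell_e>0$ for each edge $e$, a specified subset $\partial{\cal G}\subseteq V$ of boundary vertices, a vertex measure ${\cal V}$ (a measure supported on $V$ with ${\cal V}(v)>0$ for every $v\in V$), and an edge measure ${\cal E}$ (a measure giving zero mass to every vertex whose restriction to the interior of each edge $e$ equals $a_e>0$ times Lebesgue measure). ${\cal G}$ is identified with its geometric realization: the metric space obtained by attaching, for each edge $e$ with endpoints $u,v$, a closed interval of length $\ell_e$ joining $u$ and $v$. $C^0({\cal G})$ is the set of continuous functions on this space; a function is of finite type if its support lies in the union of finitely many vertices and edges, and $C^0_{\rm fn}({\cal G})$ denotes the finite-type elements of $C^0({\cal G})$. The half-degree of a vertex $v$ is $\rho(v)={\cal V}(v)^{-1}\sum_{e\ni v}{\cal E}(e)/2$ (sum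 over edges having $v$ as an endpoint), and $\rho_{\sup},\rho_{\inf}$ are the supremum and infimum of $\rho$ over $V$. *)

theory Defs
  imports "HOL-Analysis.Analysis"
begin

text \<open>
A metric graph is given by a vertex set Vs, an edge set Es, an endpoint map
ends (each edge e joins fst (ends e) to snd (ends e); the orientation is an
arbitrary choice, self-loops and multiple edges are allowed), edge lengths len,
vertex masses Vm (the vertex measure) and edge densities a (the edge measure
restricted to the interior of e is a e times Lebesgue measure).
\<close>

definition metric_graph ::
  "'v set \<Rightarrow> 'e set \<Rightarrow> ('e \<Rightarrow> 'v \<times> 'v) \<Rightarrow> ('e \<Rightarrow> real) \<Rightarrow> ('v \<Rightarrow> real) \<Rightarrow> ('e \<Rightarrow> real) \<Rightarrow> bool"
where
  "metric_graph Vs Es ends len Vm a \<longleftrightarrow>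
     (\<forall>e\<in>Es. fst (ends e) \<in> Vs \<and> snd (ends e) \<in> Vs \<and> len e > 0 \<and> a e > 0) \<and>
     (\<forall>v\<in>Vs. Vm v > 0)"

definition edge_mass :: "('e \<Rightarrow> real) \<Rightarrow> ('e \<Rightarrow> real) \<Rightarrow> 'e \<Rightarrow> real" where
  "edge_mass len a e = a e * len e"

text \<open>Number of endpoints of e equal to v (a self-loop at v counts twice).\<close>
definition incidence :: "('e \<Rightarrow> 'v \<times> 'v) \<Rightarrow> 'e \<Rightarrow> 'v \<Rightarrow> nat" where
  "incidence ends e v = (if fst (ends e) = v then 1 else 0) + (if snd (ends e) = v then 1 else 0)"

definition half_degree ::
  "'e set \<Rightarrow> ('e \<Rightarrow> 'v \<times> 'v) \<Rightarrow> ('e \<Rightarrow> real) \<Rightarrow> ('v \<Rightarrow> real) \<Rightarrow> ('e \<Rightarrow> real) \<Rightarrow> 'v \<Rightarrow> ennreal"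
where
  "half_degree Es ends len Vm a v =
     (\<Sum>\<^sub>\<infinity>e\<in>Es. ennreal (real (incidence ends e v) * edge_mass len a e / 2)) / ennreal (Vm v)"

definition rho_sup where
  "rho_sup Vs Es ends len Vm a = (SUP v\<in>Vs. half_degree Es ends len Vm a v)"

definition rho_inf where
  "rho_inf Vs Es ends len Vm a = (INF v\<in>Vs. half_degree Es ends len Vm a v)"

text \<open>
A function on the geometric realization is represented by its vertex values fv
and, for each edge e, a function fe e on the interval [0, len e] (parameter 0
at fst (ends e), parameter len e at snd (ends e)).  Continuity on the
realization means continuity on each closed edge interval plus matching the
vertex values at the endpoints.
\<close>
definition graph_C0 ::
  "'e set \<Rightarrow> ('e \<Rightarrow> 'v \<times> 'v) \<Rightarrow> ('e \<Rightarrow> real) \<Rightarrow> ('v \<Rightarrow> real) \<Rightarrow> ('e \<Rightarrow> real \<Rightarrow> real) \<Rightarrow> bool"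
where
  "graph_C0 Es ends len fv fe \<longleftrightarrow>
     (\<forall>e\<in>Es. continuous_on {0..len e} (fe e) \<and>
              fe e 0 = fv (fst (ends e)) \<and> fe e (len e) = fv (snd (ends e)))"

definition finite_type ::
  "'v set \<Rightarrow> 'e set \<Rightarrow> ('e \<Rightarrow> real) \<Rightarrow> ('v \<Rightarrow> real) \<Rightarrow> ('e \<Rightarrow> real \<Rightarrow> real) \<Rightarrow> bool"
where
  "finite_type Vs Es len fv fe \<longleftrightarrow>
     finite {v\<in>Vs. fv v \<noteq> 0} \<and> finite {e\<in>Es. \<exists>t\<in>{0..len e}. fe e t \<noteq> 0}"

definition graph_C0_fn where
  "graph_C0_fn Vs Es ends len fv fe \<longleftrightarrow>
     graph_C0 Es ends len fv fe \<and> finite_type Vs Es len fv fe"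

definition int_V :: "'v set \<Rightarrow> ('v \<Rightarrow> real) \<Rightarrow> ('v \<Rightarrow> real) \<Rightarrow> real" where
  "int_V Vs Vm fv = (\<Sum>\<^sub>\<infinity>v\<in>Vs. Vm v * fv v)"

definition int_E :: "'e set \<Rightarrow> ('e \<Rightarrow> real) \<Rightarrow> ('e \<Rightarrow> real) \<Rightarrow> ('e \<Rightarrow> real \<Rightarrow> real) \<Rightarrow> real" where
  "int_E Es len a fe = (\<Sum>\<^sub>\<infinity>e\<in>Es. a e * integral {0..len e} (fe e))"

end

theory Submission
  imports Defs
begin

text \<open>
On an edge of length l a convex function lies below its chord, so its integral is at most
l times the mean of its two endpoint values. Summing a_e times this trapezoid bound over the
edges and regrouping the endpoint values by vertex gives exactly the sum of V(v) rho(v) f(v),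
i.e. the integral of rho f against the vertex measure; the finite type of f makes all these
sums finite. Bounding rho by rho_sup needs f(v) \<ge> 0, and concave functions are handled by
passing to -f. On a regular graph rho is constant, so no sign condition is needed.
\<close>

lemma convex_on_integral_le_trapezoid:
  fixes f :: "real \<Rightarrow> real"
  assumes "a \<le> b" and f_int: "f integrable_on {a..b}" and cvx: "convex_on {a..b} f"
  shows "integral {a..b} f \<le> (b - a) * (f a + f b) / 2"
proof -
  define chord where "chord x = (f b - f a) / (b - a) * (x - a) + f a" for x
  have const_int: "((\<lambda>x. c) has_integral c * (b - a)) {a..b}" for c
    using has_integral_const_real[of c a b] \<open>a \<le> b\<close> by (simp add: mult.commute)
  have "(chord has_integral (f b - f a) / (b - a) * ((b\<^sup>2 - a\<^sup>2) / 2 - a * (b - a)) + f a * (b - a)) {a..b}"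
    unfolding chord_def using \<open>a \<le> b\<close>
    by (intro has_integral_add has_integral_mult_right has_integral_diff ident_has_integral const_int)
  moreover have "(f b - f a) / (b - a) * ((b\<^sup>2 - a\<^sup>2) / 2 - a * (b - a)) + f a * (b - a)
      = (b - a) * (f a + f b) / 2"
    by (cases "a = b") (simp_all add: field_simps power2_eq_square)
  ultimately have chord_int: "(chord has_integral (b - a) * (f a + f b) / 2) {a..b}"
    by metis
  have "integral {a..b} f \<le> integral {a..b} chord"
    using f_int chord_int convex_onD_Icc'[OF cvx]
    by (intro integral_le) (auto simp: chord_def)
  with chord_int show ?thesis
    by (simp add: integral_unique)
qed

lemma sum_endpoints_eq_sum_incidence:
  fixes w :: "'e \<Rightarrow> real" and g :: "'v \<Rightarrow> real"
  assumes U: "finite U"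
    and endpoints: "\<And>e x. e \<in> F \<Longrightarrow> x \<in> {fst (ends e), snd (ends e)} \<Longrightarrow> x \<notin> U \<Longrightarrow> g x = 0"
  shows "(\<Sum>e\<in>F. w e * (g (fst (ends e)) + g (snd (ends e))))
    = (\<Sum>v\<in>U. g v * (\<Sum>e\<in>F. real (incidence ends e v) * w e))"
proof -
  have delta: "(\<Sum>v\<in>U. (if x = v then 1 else 0) * g v) = g x"
    if "e \<in> F" "x \<in> {fst (ends e), snd (ends e)}" for e x
    using U endpoints[OF that] by (simp add: if_distrib[of "\<lambda>c. c * _"] sum.delta' cong: if_cong)
  have endpoint_sum: "(\<Sum>v\<in>U. real (incidence ends e v) * g v) = g (fst (ends e)) + g (snd (ends e))"
    if "e \<in> F" for e
  proof -
    have "real (incidence ends e v) = (if fst (ends e) = v then 1 else 0) + (if snd (ends e) = v then 1 else 0)"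
      for v by (simp add: incidence_def)
    then show ?thesis
      using delta[OF that] by (simp add: distrib_right sum.distrib)
  qed
  have "(\<Sum>v\<in>U. g v * (\<Sum>e\<in>F. real (incidence ends e v) * w e))
      = (\<Sum>e\<in>F. w e * (\<Sum>v\<in>U. real (incidence ends e v) * g v))"
    by (simp add: sum_distrib_left sum_distrib_right mult_ac sum.swap[of _ U])
  also have "\<dots> = (\<Sum>e\<in>F. w e * (g (fst (ends e)) + g (snd (ends e))))"
    by (simp add: endpoint_sum)
  finally show ?thesis ..
qed

lemma ereal_sum_mult_le_bound_mult_sum:
  fixes w :: "'a \<Rightarrow> real" and R :: "'a \<Rightarrow> ennreal"
  assumes U: "finite U" and w: "\<And>v. v \<in> U \<Longrightarrow> 0 \<le> w v" and R: "\<And>v. v \<in> U \<Longrightarrow> R v \<le> S"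
  shows "ereal (\<Sum>v\<in>U. w v * enn2real (R v)) \<le> enn2ereal S * ereal (\<Sum>v\<in>U. w v)"
proof (cases "S = top")
  case True
  \<comment> \<open>in ereal, \<infinity> * 0 = 0\<close>
  show ?thesis
  proof (cases "\<forall>v\<in>U. w v = 0")
    case False
    with U w have "0 < (\<Sum>v\<in>U. w v)" by (simp add: sum_nonneg_eq_0_iff order.strict_iff_order sum_nonneg)
    with True show ?thesis by simp
  qed (simp add: zero_ereal_def[symmetric])
next
  case False
  then obtain s where s: "S = ennreal s" "0 \<le> s" by (cases S) auto
  with w R have "(\<Sum>v\<in>U. w v * enn2real (R v)) \<le> (\<Sum>v\<in>U. w v * s)"
    by (intro sum_mono mult_left_mono) (auto simp: enn2real_leI)
  also have "\<dots> = s * (\<Sum>v\<in>U. w v)"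
    by (simp add: sum_distrib_left mult.commute)
  finally show ?thesis
    using s by simp
qed

lemma bound_mult_sum_le_ereal_sum_mult:
  fixes w :: "'a \<Rightarrow> real" and R :: "'a \<Rightarrow> ennreal"
  assumes U: "finite U" and w: "\<And>v. v \<in> U \<Longrightarrow> 0 \<le> w v"
    and R: "\<And>v. v \<in> U \<Longrightarrow> I \<le> R v" and R_finite: "\<And>v. v \<in> U \<Longrightarrow> R v \<noteq> top"
  shows "enn2ereal I * ereal (\<Sum>v\<in>U. w v) \<le> ereal (\<Sum>v\<in>U. w v * enn2real (R v))"
proof (cases "U = {}")
  case False
  then obtain v where "v \<in> U" by blast
  with R R_finite have "I \<noteq> top" by (metis top_unique)
  then obtain i where i: "I = ennreal i" "0 \<le> i" by (cases I) auto
  have "i * (\<Sum>v\<in>U. w v) = (\<Sum>v\<in>U. w v * i)"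
    by (simp add: sum_distrib_left mult.commute)
  also have "\<dots> \<le> (\<Sum>v\<in>U. w v * enn2real (R v))"
    using w R R_finite i enn2real_mono[of I]
    by (intro sum_mono mult_left_mono) (auto simp: top.not_eq_extremum)
  finally show ?thesis
    using i by simp
qed (simp add: zero_ereal_def[symmetric])

lemma ereal_sum_mult_const:
  fixes w :: "'a \<Rightarrow> real" and R :: "'a \<Rightarrow> ennreal"
  assumes "finite U" and R: "\<And>v. v \<in> U \<Longrightarrow> R v = S" and R_finite: "\<And>v. v \<in> U \<Longrightarrow> R v \<noteq> top"
  shows "ereal (\<Sum>v\<in>U. w v * enn2real (R v)) = enn2ereal S * ereal (\<Sum>v\<in>U. w v)"
proof (cases "U = {}")
  case False
  then obtain v where "v \<in> U" by blast
  with R R_finite obtain s where s: "S = ennreal s" "0 \<le> s" by (cases S) auto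
  with R show ?thesis
    by (simp add: sum_distrib_left mult.commute)
qed (simp add: zero_ereal_def[symmetric])

definition vertex_support :: "'v set \<Rightarrow> ('v \<Rightarrow> real) \<Rightarrow> 'v set" where
  "vertex_support Vs fv = {v\<in>Vs. fv v \<noteq> 0}"

definition edge_support :: "'e set \<Rightarrow> ('e \<Rightarrow> real) \<Rightarrow> ('e \<Rightarrow> real \<Rightarrow> real) \<Rightarrow> 'e set" where
  "edge_support Es len fe = {e\<in>Es. \<exists>t\<in>{0..len e}. fe e t \<noteq> 0}"

lemma graph_C0_fn_finite_supports:
  assumes "graph_C0_fn Vs Es ends len fv fe"
  shows finite_vertex_support: "finite (vertex_support Vs fv)"
    and finite_edge_support: "finite (edge_support Es len fe)"
  using assms by (simp_all add: graph_C0_fn_def finite_type_def vertex_support_def edge_support_def)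

lemma vertex_support_uminus [simp]: "vertex_support Vs (\<lambda>v. - fv v) = vertex_support Vs fv"
  by (simp add: vertex_support_def)

lemma int_V_eq_sum_vertex_support:
  assumes "finite (vertex_support Vs fv)"
  shows "int_V Vs Vm fv = (\<Sum>v\<in>vertex_support Vs fv. Vm v * fv v)"
  unfolding int_V_def using assms
  by (subst infsum_cong_neutral[where T = "vertex_support Vs fv"]) (auto simp: vertex_support_def)

lemma int_E_eq_sum_edge_support:
  assumes "finite (edge_support Es len fe)"
  shows "int_E Es len a fe = (\<Sum>e\<in>edge_support Es len fe. a e * integral {0..len e} (fe e))"
proof -
  have "integral {0..len e} (fe e) = 0" if "e \<in> Es - edge_support Es len fe" for e
    using that integral_cong[of "{0..len e}" "fe e" "\<lambda>_. 0"] by (auto simp: edge_support_def)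
  with assms show ?thesis
    unfolding int_E_def
    by (subst infsum_cong_neutral[where T = "edge_support Es len fe"]) (auto simp: edge_support_def)
qed

lemma int_E_uminus: "int_E Es len a (\<lambda>e t. - fe e t) = - int_E Es len a fe"
  by (simp add: int_E_def infsum_uminus)

lemma graph_C0_fn_uminus:
  "graph_C0_fn Vs Es ends len fv fe \<Longrightarrow> graph_C0_fn Vs Es ends len (\<lambda>v. - fv v) (\<lambda>e t. - fe e t)"
  by (simp add: graph_C0_fn_def graph_C0_def finite_type_def continuous_on_minus)

lemma edge_mass_pos: "metric_graph Vs Es ends len Vm a \<Longrightarrow> e \<in> Es \<Longrightarrow> 0 < edge_mass len a e"
  by (simp add: metric_graph_def edge_mass_def)

lemma incidence_eq_0_outside_edge_support:
  assumes G: "metric_graph Vs Es ends len Vm a" and F: "graph_C0 Es ends len fv fe"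
    and e: "e \<in> Es - edge_support Es len fe" and v: "v \<in> vertex_support Vs fv"
  shows "incidence ends e v = 0"
proof -
  have "0 \<le> len e" using G e by (auto simp: metric_graph_def less_imp_le)
  with e have "fe e 0 = 0" "fe e (len e) = 0" by (auto simp: edge_support_def)
  with F e have "fv (fst (ends e)) = 0" "fv (snd (ends e)) = 0" by (auto simp: graph_C0_def)
  with v show ?thesis by (auto simp: incidence_def vertex_support_def)
qed

lemma half_degree_eq_sum:
  assumes G: "metric_graph Vs Es ends len Vm a" and v: "v \<in> Vs"
    and F: "finite F" "F \<subseteq> Es" and outside: "\<And>e. e \<in> Es - F \<Longrightarrow> incidence ends e v = 0"
  shows "half_degree Es ends len Vm a v
    = ennreal ((\<Sum>e\<in>F. real (incidence ends e v) * edge_mass len a e / 2) / Vm v)"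
proof -
  have nonneg: "0 \<le> real (incidence ends e v) * edge_mass len a e / 2" if "e \<in> Es" for e
    using edge_mass_pos[OF G that] by simp
  have "(\<Sum>\<^sub>\<infinity>e\<in>Es. ennreal (real (incidence ends e v) * edge_mass len a e / 2))
      = (\<Sum>e\<in>F. ennreal (real (incidence ends e v) * edge_mass len a e / 2))"
    using F outside by (subst infsum_cong_neutral[where T = F]) auto
  also have "\<dots> = ennreal (\<Sum>e\<in>F. real (incidence ends e v) * edge_mass len a e / 2)"
    using F nonneg by (intro sum_ennreal) auto
  finally have "half_degree Es ends len Vm a v
      = ennreal (\<Sum>e\<in>F. real (incidence ends e v) * edge_mass len a e / 2) / ennreal (Vm v)"
    by (simp add: half_degree_def)
  also have "\<dots> = ennreal ((\<Sum>e\<in>F. real (incidence ends e v) * edge_mass len a e / 2) / Vm v)"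
    using G v F nonneg by (intro divide_ennreal sum_nonneg) (auto simp: metric_graph_def)
  finally show ?thesis .
qed

lemma half_degree_on_vertex_support:
  assumes G: "metric_graph Vs Es ends len Vm a" and F: "graph_C0_fn Vs Es ends len fv fe"
    and v: "v \<in> vertex_support Vs fv"
  shows "half_degree Es ends len Vm a v
    = ennreal ((\<Sum>e\<in>edge_support Es len fe. real (incidence ends e v) * edge_mass len a e / 2) / Vm v)"
proof (rule half_degree_eq_sum[OF G])
  show "v \<in> Vs" using v by (simp add: vertex_support_def)
  show "finite (edge_support Es len fe)"
    using F by (rule finite_edge_support)
  show "edge_support Es len fe \<subseteq> Es" by (auto simp: edge_support_def)
  show "incidence ends e v = 0" if "e \<in> Es - edge_support Es len fe" for e
    using F that v by (intro incidence_eq_0_outside_edge_support[OF G]) (auto simp: graph_C0_fn_def)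
qed

lemma edge_trapezoid_sum_eq_half_degree_sum:
  assumes G: "metric_graph Vs Es ends len Vm a" and F: "graph_C0_fn Vs Es ends len fv fe"
  shows "(\<Sum>e\<in>edge_support Es len fe. edge_mass len a e / 2 * (fv (fst (ends e)) + fv (snd (ends e))))
    = (\<Sum>v\<in>vertex_support Vs fv. Vm v * fv v * enn2real (half_degree Es ends len Vm a v))"
proof -
  let ?FE = "edge_support Es len fe" and ?FV = "vertex_support Vs fv"
  let ?deg = "\<lambda>v. \<Sum>e\<in>?FE. real (incidence ends e v) * (edge_mass len a e / 2)"
  have "(\<Sum>e\<in>?FE. edge_mass len a e / 2 * (fv (fst (ends e)) + fv (snd (ends e))))
      = (\<Sum>v\<in>?FV. fv v * ?deg v)"
  proof (rule sum_endpoints_eq_sum_incidence)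
    show "finite ?FV" using F by (rule finite_vertex_support)
    show "fv x = 0" if "e \<in> ?FE" "x \<in> {fst (ends e), snd (ends e)}" "x \<notin> ?FV" for e x
      using G that by (auto simp: metric_graph_def edge_support_def vertex_support_def)
  qed
  also have "\<dots> = (\<Sum>v\<in>?FV. Vm v * fv v * enn2real (half_degree Es ends len Vm a v))"
  proof (rule sum.cong[OF refl])
    fix v assume v: "v \<in> ?FV"
    have "0 < Vm v" using G v by (simp add: metric_graph_def vertex_support_def)
    moreover have "0 \<le> ?deg v"
      using edge_mass_pos[OF G] by (intro sum_nonneg) (auto simp: edge_support_def less_imp_le)
    ultimately show "fv v * ?deg v = Vm v * fv v * enn2real (half_degree Es ends len Vm a v)"
      by (simp add: half_degree_on_vertex_support[OF G F v])
  qed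
  finally show ?thesis .
qed

lemma int_E_le_edge_trapezoid_sum:
  assumes G: "metric_graph Vs Es ends len Vm a" and F: "graph_C0_fn Vs Es ends len fv fe"
    and cvx: "\<forall>e\<in>Es. convex_on {0..len e} (fe e)"
  shows "int_E Es len a fe
    \<le> (\<Sum>e\<in>edge_support Es len fe. edge_mass len a e / 2 * (fv (fst (ends e)) + fv (snd (ends e))))"
proof -
  have "a e * integral {0..len e} (fe e) \<le> edge_mass len a e / 2 * (fv (fst (ends e)) + fv (snd (ends e)))"
    if e: "e \<in> Es" for e
  proof -
    have "0 < len e" "0 < a e" using G e by (auto simp: metric_graph_def)
    moreover have "continuous_on {0..len e} (fe e)" "fe e 0 = fv (fst (ends e))" "fe e (len e) = fv (snd (ends e))"
      using F e by (auto simp: graph_C0_fn_def graph_C0_def)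
    ultimately have "a e * integral {0..len e} (fe e) \<le> a e * ((len e - 0) * (fe e 0 + fe e (len e)) / 2)"
      using cvx e by (intro mult_left_mono convex_on_integral_le_trapezoid integrable_continuous_interval) auto
    also have "\<dots> = edge_mass len a e / 2 * (fv (fst (ends e)) + fv (snd (ends e)))"
      by (simp add: edge_mass_def \<open>fe e 0 = _\<close> \<open>fe e (len e) = _\<close>)
    finally show ?thesis .
  qed
  then show ?thesis
    by (auto simp: int_E_eq_sum_edge_support[OF finite_edge_support[OF F]] edge_support_def
        intro!: sum_mono)
qed

lemma int_E_le_half_degree_sum:
  assumes G: "metric_graph Vs Es ends len Vm a" and F: "graph_C0_fn Vs Es ends len fv fe"
    and "\<forall>e\<in>Es. convex_on {0..len e} (fe e)"
  shows "int_E Es len a fe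
    \<le> (\<Sum>v\<in>vertex_support Vs fv. Vm v * fv v * enn2real (half_degree Es ends len Vm a v))"
  using int_E_le_edge_trapezoid_sum[OF assms] edge_trapezoid_sum_eq_half_degree_sum[OF G F] by simp

lemma half_degree_sum_le_int_E:
  assumes G: "metric_graph Vs Es ends len Vm a" and F: "graph_C0_fn Vs Es ends len fv fe"
    and "\<forall>e\<in>Es. concave_on {0..len e} (fe e)"
  shows "(\<Sum>v\<in>vertex_support Vs fv. Vm v * fv v * enn2real (half_degree Es ends len Vm a v))
    \<le> int_E Es len a fe"
  using int_E_le_half_degree_sum[OF G graph_C0_fn_uminus[OF F]] assms(3)
  by (simp add: int_E_uminus concave_on_def sum_negf)

lemma int_E_le_rho_sup_mult_int_V:
  assumes G: "metric_graph Vs Es ends len Vm a" and F: "graph_C0_fn Vs Es ends len fv fe"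
    and cvx: "\<forall>e\<in>Es. convex_on {0..len e} (fe e)" and nonneg: "\<forall>v\<in>Vs. 0 \<le> fv v"
  shows "ereal (int_E Es len a fe) \<le> enn2ereal (rho_sup Vs Es ends len Vm a) * ereal (int_V Vs Vm fv)"
proof -
  have fin: "finite (vertex_support Vs fv)"
    using F by (rule finite_vertex_support)
  have "ereal (int_E Es len a fe)
      \<le> ereal (\<Sum>v\<in>vertex_support Vs fv. Vm v * fv v * enn2real (half_degree Es ends len Vm a v))"
    using int_E_le_half_degree_sum[OF G F cvx] by simp
  also have "\<dots> \<le> enn2ereal (rho_sup Vs Es ends len Vm a) * ereal (\<Sum>v\<in>vertex_support Vs fv. Vm v * fv v)"
  proof (rule ereal_sum_mult_le_bound_mult_sum[OF fin])
    fix v assume "v \<in> vertex_support Vs fv"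
    then have v: "v \<in> Vs" by (simp add: vertex_support_def)
    show "0 \<le> Vm v * fv v" using G nonneg v by (auto simp: metric_graph_def less_imp_le)
    show "half_degree Es ends len Vm a v \<le> rho_sup Vs Es ends len Vm a"
      unfolding rho_sup_def using v by (rule SUP_upper)
  qed
  finally show ?thesis
    by (simp add: int_V_eq_sum_vertex_support fin)
qed

lemma rho_inf_mult_int_V_le_int_E:
  assumes G: "metric_graph Vs Es ends len Vm a" and F: "graph_C0_fn Vs Es ends len fv fe"
    and ccv: "\<forall>e\<in>Es. concave_on {0..len e} (fe e)" and nonneg: "\<forall>v\<in>Vs. 0 \<le> fv v"
  shows "enn2ereal (rho_inf Vs Es ends len Vm a) * ereal (int_V Vs Vm fv) \<le> ereal (int_E Es len a fe)"
proof -
  have fin: "finite (vertex_support Vs fv)"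
    using F by (rule finite_vertex_support)
  have "enn2ereal (rho_inf Vs Es ends len Vm a) * ereal (\<Sum>v\<in>vertex_support Vs fv. Vm v * fv v)
      \<le> ereal (\<Sum>v\<in>vertex_support Vs fv. Vm v * fv v * enn2real (half_degree Es ends len Vm a v))"
  proof (rule bound_mult_sum_le_ereal_sum_mult[OF fin])
    fix v assume v_supp: "v \<in> vertex_support Vs fv"
    then have v: "v \<in> Vs" by (simp add: vertex_support_def)
    show "0 \<le> Vm v * fv v" using G nonneg v by (auto simp: metric_graph_def less_imp_le)
    show "rho_inf Vs Es ends len Vm a \<le> half_degree Es ends len Vm a v"
      unfolding rho_inf_def using v by (rule INF_lower)
    show "half_degree Es ends len Vm a v \<noteq> top"
      by (simp add: half_degree_on_vertex_support[OF G F v_supp])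
  qed
  also have "\<dots> \<le> ereal (int_E Es len a fe)"
    using half_degree_sum_le_int_E[OF G F ccv] by simp
  finally show ?thesis
    by (simp add: int_V_eq_sum_vertex_support fin)
qed

lemma half_degree_sum_eq_const_mult_int_V:
  assumes G: "metric_graph Vs Es ends len Vm a" and F: "graph_C0_fn Vs Es ends len fv fe"
    and regular: "\<forall>v\<in>Vs. half_degree Es ends len Vm a v = S"
  shows "ereal (\<Sum>v\<in>vertex_support Vs fv. Vm v * fv v * enn2real (half_degree Es ends len Vm a v))
    = enn2ereal S * ereal (int_V Vs Vm fv)"
proof -
  have fin: "finite (vertex_support Vs fv)"
    using F by (rule finite_vertex_support)
  then show ?thesis
    using regular half_degree_on_vertex_support[OF G F]
    by (auto simp: int_V_eq_sum_vertex_support vertex_support_def intro!: ereal_sum_mult_const)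
qed

lemma int_E_le_const_mult_int_V:
  assumes G: "metric_graph Vs Es ends len Vm a" and F: "graph_C0_fn Vs Es ends len fv fe"
    and cvx: "\<forall>e\<in>Es. convex_on {0..len e} (fe e)"
    and regular: "\<forall>v\<in>Vs. half_degree Es ends len Vm a v = S"
  shows "ereal (int_E Es len a fe) \<le> enn2ereal S * ereal (int_V Vs Vm fv)"
  using int_E_le_half_degree_sum[OF G F cvx] half_degree_sum_eq_const_mult_int_V[OF G F regular]
  by (metis ereal_less_eq(3))

lemma const_mult_int_V_le_int_E:
  assumes G: "metric_graph Vs Es ends len Vm a" and F: "graph_C0_fn Vs Es ends len fv fe"
    and ccv: "\<forall>e\<in>Es. concave_on {0..len e} (fe e)"
    and regular: "\<forall>v\<in>Vs. half_degree Es ends len Vm a v = S"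
  shows "enn2ereal S * ereal (int_V Vs Vm fv) \<le> ereal (int_E Es len a fe)"
  using half_degree_sum_le_int_E[OF G F ccv] half_degree_sum_eq_const_mult_int_V[OF G F regular]
  by (metis ereal_less_eq(3))

theorem mainTheorem1:
  fixes Vs :: "'v set" and Es :: "'e set" and ends :: "'e \<Rightarrow> 'v \<times> 'v"
    and len :: "'e \<Rightarrow> real" and Vm :: "'v \<Rightarrow> real" and a :: "'e \<Rightarrow> real"
  assumes G: "metric_graph Vs Es ends len Vm a"
  shows
   "(\<forall>fv fe. graph_C0_fn Vs Es ends len fv fe
        \<and> (\<forall>e\<in>Es. convex_on {0..len e} (fe e)) \<and> (\<forall>v\<in>Vs. fv v \<ge> 0)
      \<longrightarrow> ereal (int_E Es len a fe)
            \<le> enn2ereal (rho_sup Vs Es ends len Vm a) * ereal (int_V Vs Vm fv))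
  \<and> (\<forall>fv fe. graph_C0_fn Vs Es ends len fv fe
        \<and> (\<forall>e\<in>Es. concave_on {0..len e} (fe e))
        \<and> (\<forall>v\<in>Vs. fv v \<ge> 0) \<and> (\<forall>e\<in>Es. \<forall>t\<in>{0..len e}. fe e t \<ge> 0)
      \<longrightarrow> enn2ereal (rho_inf Vs Es ends len Vm a) * ereal (int_V Vs Vm fv)
            \<le> ereal (int_E Es len a fe))
  \<and> (rho_inf Vs Es ends len Vm a = rho_sup Vs Es ends len Vm a \<longrightarrow>
      (\<forall>fv fe. graph_C0_fn Vs Es ends len fv fe
          \<and> (\<forall>e\<in>Es. convex_on {0..len e} (fe e))
        \<longrightarrow> ereal (int_E Es len a fe)
              \<le> enn2ereal (rho_sup Vs Es ends len Vm a) * ereal (int_V Vs Vm fv))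
    \<and> (\<forall>fv fe. graph_C0_fn Vs Es ends len fv fe
          \<and> (\<forall>e\<in>Es. concave_on {0..len e} (fe e))
        \<longrightarrow> enn2ereal (rho_inf Vs Es ends len Vm a) * ereal (int_V Vs Vm fv)
              \<le> ereal (int_E Es len a fe)))"
proof -
  let ?sup = "rho_sup Vs Es ends len Vm a" and ?inf = "rho_inf Vs Es ends len Vm a"
  have regular: "\<forall>v\<in>Vs. half_degree Es ends len Vm a v = ?sup" if "?inf = ?sup"
    using that unfolding rho_inf_def rho_sup_def by (metis INF_lower SUP_upper antisym)
  show ?thesis
  proof (intro conjI allI impI; elim conjE)
    fix fv fe
    assume "graph_C0_fn Vs Es ends len fv fe" "\<forall>e\<in>Es. convex_on {0..len e} (fe e)" "\<forall>v\<in>Vs. 0 \<le> fv v"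
    then show "ereal (int_E Es len a fe) \<le> enn2ereal ?sup * ereal (int_V Vs Vm fv)"
      by (rule int_E_le_rho_sup_mult_int_V[OF G])
  next
    fix fv fe
    assume "graph_C0_fn Vs Es ends len fv fe" "\<forall>e\<in>Es. concave_on {0..len e} (fe e)" "\<forall>v\<in>Vs. 0 \<le> fv v"
    then show "enn2ereal ?inf * ereal (int_V Vs Vm fv) \<le> ereal (int_E Es len a fe)"
      by (rule rho_inf_mult_int_V_le_int_E[OF G])
  next
    fix fv fe
    assume "?inf = ?sup" "graph_C0_fn Vs Es ends len fv fe" "\<forall>e\<in>Es. convex_on {0..len e} (fe e)"
    then show "ereal (int_E Es len a fe) \<le> enn2ereal ?sup * ereal (int_V Vs Vm fv)"
      using int_E_le_const_mult_int_V[OF G] regular by blast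
  next
    fix fv fe
    assume "?inf = ?sup" "graph_C0_fn Vs Es ends len fv fe" "\<forall>e\<in>Es. concave_on {0..len e} (fe e)"
    then show "enn2ereal ?inf * ereal (int_V Vs Vm fv) \<le> ereal (int_E Es len a fe)"
      using const_mult_int_V_le_int_E[OF G] regular by metis
  qed
qed

end
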